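(* Let $n\ge2$ and let $\Omega_n=\{A\in\mathbb{C}^{n\times n}:\rho(A)<1\}$ be the spectral ball, where $\rho$ denotes the spectral radius. Then $\Omega_n$ is a union of immersed complex lines (images of holomorphic maps $\mathbb{C}\to\Omega_n$ that are immersions). Consequently there exists no strictly plurisubharmonic function on $\Omega_n$ that is bounded from above. *)

theory Defs
  imports "HOL-Analysis.Analysis"
begin

text \<open>Complex n x n matrices are modelled as complex^'n^'n (n = CARD('n)).
  The norm on this type is the Frobenius (Euclidean) norm of C^{n^2}.\<close>

definition eigenvalue_of :: "complex^'n^'n \<Rightarrow> complex \<Rightarrow> bool" where
  "eigenvalue_of A c \<longleftrightarrow> (\<exists>v::complex^'n. v \<noteq> 0 \<and> A *v v = c *s v)"

definition spectral_radius :: "complex^'n^'n \<Rightarrow> real" where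
  "spectral_radius A = Max {cmod c | c. eigenvalue_of A c}"

definition spectral_ball :: "(complex^'n^'n) set" where
  "spectral_ball = {A. spectral_radius A < 1}"

definition cscale :: "complex \<Rightarrow> complex^'n^'n \<Rightarrow> complex^'n^'n" where
  "cscale c M = (\<chi> i j. c * M $ i $ j)"

definition holomorphic_immersion :: "(complex \<Rightarrow> complex^'n^'n) \<Rightarrow> bool" where
  "holomorphic_immersion f \<longleftrightarrow>
     (\<forall>i j. (\<lambda>z. f z $ i $ j) holomorphic_on UNIV) \<and>
     (\<forall>z. \<exists>i j. deriv (\<lambda>w. f w $ i $ j) z \<noteq> 0)"

definition usc_on :: "('a::metric_space) set \<Rightarrow> ('a \<Rightarrow> ereal) \<Rightarrow> bool" where
  "usc_on S u \<longleftrightarrow> (\<forall>z\<in>S. \<forall>c. u z < c \<longrightarrow>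
       (\<exists>d>0. \<forall>w\<in>S. dist w z < d \<longrightarrow> u w < c))"

definition circle_mean :: "(complex^'n^'n \<Rightarrow> ereal) \<Rightarrow> complex^'n^'n \<Rightarrow> complex^'n^'n \<Rightarrow> ereal" where
  "circle_mean u a b =
     (let f = (\<lambda>t. u (a + cscale (cis t) b)) in
      ereal (1 / (2 * pi)) *
        (enn2ereal (\<integral>\<^sup>+ t\<in>{0..2*pi}. e2ennreal (f t) \<partial>lborel)
         - enn2ereal (\<integral>\<^sup>+ t\<in>{0..2*pi}. e2ennreal (- f t) \<partial>lborel)))"

text \<open>plurisubharmonic functions u : S -> [-infinity, infinity) (Klimek's definition):
  upper semicontinuous, not identically -infinity on any connected component,
  and subharmonic on every complex line (sub-mean value property on closed discs).\<close>
definition plurisubharmonic_on :: "(complex^'n^'n) set \<Rightarrow> (complex^'n^'n \<Rightarrow> ereal) \<Rightarrow> bool" where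
  "plurisubharmonic_on S u \<longleftrightarrow>
     (\<forall>z\<in>S. u z < \<infinity>) \<and>
     usc_on S u \<and>
     (\<forall>z\<in>S. \<exists>w\<in>connected_component_set S z. u w \<noteq> -\<infinity>) \<and>
     (\<forall>a b. (\<forall>\<zeta>. cmod \<zeta> \<le> 1 \<longrightarrow> a + cscale \<zeta> b \<in> S) \<longrightarrow> u a \<le> circle_mean u a b)"

definition strictly_plurisubharmonic_on :: "(complex^'n^'n) set \<Rightarrow> (complex^'n^'n \<Rightarrow> ereal) \<Rightarrow> bool" where
  "strictly_plurisubharmonic_on S u \<longleftrightarrow>
     plurisubharmonic_on S u \<and>
     (\<forall>z\<in>S. \<exists>r>0. \<exists>\<epsilon>>0. ball z r \<subseteq> S \<and>
        plurisubharmonic_on (ball z r) (\<lambda>w. u w - ereal (\<epsilon> * (norm w)\<^sup>2)))"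

end

theory Submission
  imports Defs "Jordan_Normal_Form.Char_Poly" "HOL-Complex_Analysis.Complex_Analysis"
begin

text \<open>Through every matrix \<open>A\<close> of the spectral ball passes an entire complex line \<open>A + \<zeta> B\<close>
  contained in it: if \<open>w\<close> is a left eigenvector of \<open>A\<close> and \<open>v \<noteq> 0\<close> is orthogonal to \<open>w\<close>
  (possible since \<open>n \<ge> 2\<close>), then for \<open>B = v w\<^sup>T\<close> every eigenvalue of \<open>A + \<zeta> B\<close> is an eigenvalue
  of \<open>A\<close>. A plurisubharmonic function bounded above restricts on such a line to a bounded
  subharmonic function of \<open>\<zeta>\<close>, which by Liouville's theorem has circle means at most its
  central value. Strict plurisubharmonicity near \<open>A\<close> would instead force these means to exceed
  the central value by a multiple of \<open>\<rho>\<^sup>2 |B|\<^sup>2\<close>, the mean of \<open>|A + \<rho> e\<^sup>i\<^sup>t B|\<^sup>2 - |A|\<^sup>2\<close>.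
  Liouville's theorem itself follows from the maximum principle on annuli applied to
  \<open>h - \<epsilon> ln |z|\<close>.\<close>

no_notation Matrix.vec_index (infixl "$" 100)
no_notation Formal_Power_Series.fps_nth (infixl "$" 75)

section \<open>Eigenvalues via the characteristic polynomial\<close>

definition to_index :: "'n::finite \<Rightarrow> nat" where
  "to_index = (SOME h. bij_betw h (UNIV::'n set) {0..<CARD('n)})"

definition from_index :: "nat \<Rightarrow> 'n::finite" where
  "from_index = inv_into UNIV to_index"

lemma to_index_bij: "bij_betw (to_index :: 'n::finite \<Rightarrow> nat) UNIV {0..<CARD('n)}"
proof -
  have "\<exists>h. bij_betw h (UNIV::'n set) {0..<CARD('n)}"
    using ex_bij_betw_finite_nat[of "UNIV::'n set"] by simp
  then show ?thesis unfolding to_index_def by (rule someI_ex)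
qed

lemma from_index_bij: "bij_betw (from_index :: nat \<Rightarrow> 'n::finite) {0..<CARD('n)} UNIV"
  unfolding from_index_def by (rule bij_betw_inv_into[OF to_index_bij])

lemma to_index_less [simp]: "to_index (k::'n::finite) < CARD('n)"
  using to_index_bij[where 'n='n] by (auto simp: bij_betw_def)

lemma from_index_to_index [simp]: "from_index (to_index (k::'n::finite)) = k"
  unfolding from_index_def using to_index_bij[where 'n='n] by (simp add: bij_betw_def)

lemma to_index_from_index [simp]: "i < CARD('n) \<Longrightarrow> to_index (from_index i :: 'n::finite) = i"
  unfolding from_index_def using to_index_bij[where 'n='n]
  by (simp add: bij_betw_def f_inv_into_f)

lemma sum_from_index: "(\<Sum>l=0..<CARD('n). f (from_index l :: 'n::finite)) = (\<Sum>j\<in>UNIV. f j)"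
  using sum.reindex_bij_betw[OF from_index_bij[where 'n='n], of f] by simp

definition to_mat :: "complex^'n^'n \<Rightarrow> complex mat" where
  "to_mat A = Matrix.mat CARD('n::finite) CARD('n) (\<lambda>(i,j). A $ from_index i $ from_index j)"

lemma to_mat_carrier: "to_mat (A::complex^'n^'n) \<in> carrier_mat CARD('n::finite) CARD('n)"
  unfolding to_mat_def by simp

lemma to_mat_transpose: "to_mat (transpose A) = transpose_mat (to_mat (A::complex^'n::finite^'n))"
  by (rule eq_matI) (auto simp: to_mat_def transpose_def)

lemma eigenvalue_to_mat_if_eigenvalue_of:
  assumes "eigenvalue_of (A::complex^'n::finite^'n) c"
  shows "eigenvalue (to_mat A) c"
proof -
  from assms obtain x where x: "x \<noteq> 0" "A *v x = c *s x" unfolding eigenvalue_of_def by blast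
  define v where "v = Matrix.vec CARD('n) (\<lambda>i. x $ (from_index i :: 'n))"
  from x(1) obtain k where k: "x $ k \<noteq> 0"
    by (metis Finite_Cartesian_Product.vec_eq_iff Finite_Cartesian_Product.zero_index)
  have "v \<noteq> 0\<^sub>v CARD('n)"
  proof
    assume "v = 0\<^sub>v CARD('n)"
    hence "Matrix.vec_index v (to_index k) = 0" by simp
    thus False using k by (simp add: v_def)
  qed
  moreover have "to_mat A *\<^sub>v v = c \<cdot>\<^sub>v v"
  proof (rule eq_vecI)
    fix i assume "i < dim_vec (c \<cdot>\<^sub>v v)"
    hence i: "i < CARD('n)" by (simp add: v_def)
    have "Matrix.vec_index (to_mat A *\<^sub>v v) i
        = (\<Sum>l=0..<CARD('n). A $ from_index i $ (from_index l :: 'n) * x $ from_index l)"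
      using i by (simp add: to_mat_def v_def scalar_prod_def)
    also have "\<dots> = (\<Sum>j\<in>UNIV. A $ from_index i $ j * x $ j)" by (rule sum_from_index)
    also have "\<dots> = (A *v x) $ from_index i" by (simp add: matrix_vector_mult_def)
    also have "\<dots> = c * x $ from_index i" using x(2) by simp
    finally show "Matrix.vec_index (to_mat A *\<^sub>v v) i = Matrix.vec_index (c \<cdot>\<^sub>v v) i"
      using i by (simp add: v_def)
  qed (simp add: to_mat_def v_def)
  moreover have "v \<in> carrier_vec CARD('n)" "dim_row (to_mat A) = CARD('n)"
    by (simp_all add: v_def to_mat_def)
  ultimately show ?thesis unfolding eigenvalue_def eigenvector_def by auto
qed

lemma eigenvalue_of_if_eigenvalue_to_mat:
  assumes "eigenvalue (to_mat (A::complex^'n::finite^'n)) c"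
  shows "eigenvalue_of A c"
proof -
  from assms obtain v where v: "v \<in> carrier_vec CARD('n)" "v \<noteq> 0\<^sub>v CARD('n)"
      "to_mat A *\<^sub>v v = c \<cdot>\<^sub>v v"
    unfolding eigenvalue_def eigenvector_def by (auto simp: to_mat_def)
  define x where "x = (\<chi> k. Matrix.vec_index v (to_index (k::'n)))"
  from v(1,2) obtain i where i: "i < CARD('n)" "Matrix.vec_index v i \<noteq> 0"
    by (metis carrier_vecD eq_vecI index_zero_vec(1,2))
  have "x $ from_index i \<noteq> 0" using i by (simp add: x_def)
  hence "x \<noteq> 0" by auto
  moreover have "A *v x = c *s x"
  proof (subst Finite_Cartesian_Product.vec_eq_iff, intro allI)
    fix k :: 'n
    have "(A *v x) $ k = (\<Sum>j\<in>UNIV. A $ k $ j * Matrix.vec_index v (to_index j))"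
      by (simp add: matrix_vector_mult_def x_def)
    also have "\<dots> = (\<Sum>l=0..<CARD('n).
        A $ k $ from_index l * Matrix.vec_index v (to_index (from_index l :: 'n)))"
      by (rule sum_from_index[symmetric])
    also have "\<dots> = (\<Sum>l=0..<CARD('n). A $ from_index (to_index k) $ from_index l * Matrix.vec_index v l)"
      by (intro sum.cong) auto
    also have "\<dots> = Matrix.vec_index (to_mat A *\<^sub>v v) (to_index k)"
      using v(1) by (simp add: to_mat_def scalar_prod_def)
    also have "\<dots> = c * Matrix.vec_index v (to_index k)" using v(1,3) by simp
    finally show "(A *v x) $ k = (c *s x) $ k" by (simp add: x_def)
  qed
  ultimately show ?thesis unfolding eigenvalue_of_def by blast
qed

lemma eigenvalue_of_iff_char_poly_root:
  "eigenvalue_of (A::complex^'n::finite^'n) c \<longleftrightarrow> poly (char_poly (to_mat A)) c = 0"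
  using eigenvalue_to_mat_if_eigenvalue_of eigenvalue_of_if_eigenvalue_to_mat
    eigenvalue_root_char_poly[OF to_mat_carrier] by blast

lemma eigenvalue_of_transpose:
  "eigenvalue_of (transpose A) c \<longleftrightarrow> eigenvalue_of (A::complex^'n::finite^'n) c"
  unfolding eigenvalue_of_iff_char_poly_root to_mat_transpose
  using char_poly_transpose_mat[OF to_mat_carrier[of A]] by simp

lemma finite_eigenvalues: "finite {c. eigenvalue_of (A::complex^'n::finite^'n) c}"
proof -
  have "char_poly (to_mat A) \<noteq> 0"
    using degree_monic_char_poly[OF to_mat_carrier, of A] by auto
  then show ?thesis unfolding eigenvalue_of_iff_char_poly_root by (rule poly_roots_finite)
qed

lemma eigenvalue_of_exists: "\<exists>c. eigenvalue_of (A::complex^'n::finite^'n) c"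
proof -
  obtain as where as: "char_poly (to_mat A) = (\<Prod>a\<leftarrow>as. [:- a, 1:])" "length as = CARD('n)"
    using char_poly_factorized[OF to_mat_carrier] by blast
  then obtain a as' where "as = a # as'" by (cases as) auto
  hence "poly (char_poly (to_mat A)) a = 0" using as(1) by (simp add: poly_prod_list)
  thus ?thesis unfolding eigenvalue_of_iff_char_poly_root by blast
qed

lemma spectral_radius_less_one_iff:
  "spectral_radius (A::complex^'n::finite^'n) < 1 \<longleftrightarrow> (\<forall>c. eigenvalue_of A c \<longrightarrow> cmod c < 1)"
proof -
  have S: "{cmod c | c. eigenvalue_of A c} = cmod ` {c. eigenvalue_of A c}" by auto
  have "finite {cmod c | c. eigenvalue_of A c}" unfolding S using finite_eigenvalues[of A] by simp
  moreover have "{cmod c | c. eigenvalue_of A c} \<noteq> {}" using eigenvalue_of_exists by auto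
  ultimately show ?thesis unfolding spectral_radius_def using Max_less_iff by auto
qed

lemma zero_in_spectral_ball: "(0::complex^'n::finite^'n) \<in> spectral_ball"
proof -
  have "cmod c < 1" if "eigenvalue_of (0::complex^'n^'n) c" for c
  proof -
    from that obtain x :: "complex^'n" where x: "x \<noteq> 0" "0 *v x = c *s x"
      unfolding eigenvalue_of_def by blast
    from x(1) obtain k where k: "x $ k \<noteq> 0"
      by (metis Finite_Cartesian_Product.vec_eq_iff Finite_Cartesian_Product.zero_index)
    have "c * x $ k = 0" using arg_cong[OF x(2), of "\<lambda>y. y $ k"]
      by (simp add: matrix_vector_mult_def)
    hence "c = 0" using k by simp
    thus ?thesis by simp
  qed
  thus ?thesis unfolding spectral_ball_def spectral_radius_less_one_iff by blast
qed

section \<open>Complex lines in the spectral ball\<close>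

lemma cscale_0 [simp]: "cscale 0 B = 0"
  by (simp add: cscale_def Finite_Cartesian_Product.vec_eq_iff)

lemma cscale_add: "cscale x B + cscale y B = cscale (x + y) (B::complex^'n^'n)"
  by (simp add: cscale_def Finite_Cartesian_Product.vec_eq_iff algebra_simps)

lemma cscale_diff: "cscale x B - cscale y B = cscale (x - y) (B::complex^'n^'n)"
  by (simp add: cscale_def Finite_Cartesian_Product.vec_eq_iff algebra_simps)

lemma cscale_cscale: "cscale x (cscale y B) = cscale (x * y) (B::complex^'n^'n)"
  by (simp add: cscale_def Finite_Cartesian_Product.vec_eq_iff algebra_simps)

lemma norm_matrix_power2:
  "(norm (M::complex^'n^'m))\<^sup>2 = (\<Sum>i\<in>UNIV. \<Sum>j\<in>UNIV. (cmod (M $ i $ j))\<^sup>2)"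
proof -
  have row: "(norm (M $ i))\<^sup>2 = (\<Sum>j\<in>UNIV. (cmod (M $ i $ j))\<^sup>2)" for i
    unfolding norm_vec_def L2_set_def by (simp add: sum_nonneg)
  show ?thesis unfolding norm_vec_def[of M] L2_set_def
    by (simp add: sum_nonneg row[symmetric])
qed

lemma norm_cscale: "norm (cscale z (B::complex^'n^'n)) = cmod z * norm B"
proof -
  have "(norm (cscale z B))\<^sup>2 = (cmod z * norm B)\<^sup>2"
    unfolding norm_matrix_power2 power_mult_distrib
    by (simp add: cscale_def norm_mult power_mult_distrib sum_distrib_left)
  thus ?thesis by (simp add: power2_eq_imp_eq)
qed

lemma eigenvalue_of_rank_one_update:
  fixes A :: "complex^'n::finite^'n"
  assumes left: "transpose A *v w = c *s w"
    and orth: "(\<Sum>i\<in>UNIV. w $ i * v $ i) = 0"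
    and ev: "eigenvalue_of (A + cscale z (\<chi> i j. v $ i * w $ j)) \<mu>"
  shows "\<mu> = c \<or> eigenvalue_of A \<mu>"
proof -
  let ?M = "A + cscale z (\<chi> i j. v $ i * w $ j)"
  from ev obtain x where x: "x \<noteq> 0" "?M *v x = \<mu> *s x" unfolding eigenvalue_of_def by blast
  define s where "s = (\<Sum>j\<in>UNIV. w $ j * x $ j)"
  have wA: "(\<Sum>i\<in>UNIV. A $ i $ j * w $ i) = c * w $ j" for j
    using arg_cong[OF left, of "\<lambda>y. y $ j"] by (simp add: matrix_vector_mult_def transpose_def)
  have Mx: "(?M *v x) $ i = (A *v x) $ i + z * v $ i * s" for i
    by (simp add: matrix_vector_mult_def cscale_def s_def sum.distrib
        distrib_right sum_distrib_left mult.assoc)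
  txt \<open>Pair both sides of \<open>?M x = \<mu> x\<close> with \<open>w\<close>: the update drops out by orthogonality.\<close>
  have "(\<Sum>i\<in>UNIV. w $ i * (?M *v x) $ i)
      = (\<Sum>i\<in>UNIV. w $ i * (A *v x) $ i) + z * s * (\<Sum>i\<in>UNIV. w $ i * v $ i)"
    unfolding Mx by (simp add: algebra_simps sum.distrib sum_distrib_left)
  also have "\<dots> = (\<Sum>i\<in>UNIV. \<Sum>j\<in>UNIV. w $ i * A $ i $ j * x $ j)"
    using orth by (simp add: matrix_vector_mult_def sum_distrib_left mult.assoc)
  also have "\<dots> = (\<Sum>j\<in>UNIV. (\<Sum>i\<in>UNIV. A $ i $ j * w $ i) * x $ j)"
    by (subst sum.swap) (simp add: sum_distrib_left sum_distrib_right mult_ac)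
  also have "\<dots> = c * s" by (simp add: wA s_def sum_distrib_left mult.assoc)
  finally have "(\<Sum>i\<in>UNIV. w $ i * (?M *v x) $ i) = c * s" .
  moreover have "(\<Sum>i\<in>UNIV. w $ i * (?M *v x) $ i) = \<mu> * s"
    unfolding x(2) by (simp add: s_def sum_distrib_left mult.left_commute)
  ultimately have "(\<mu> - c) * s = 0" by (simp add: left_diff_distrib)
  hence "\<mu> = c \<or> s = 0" by auto
  thus ?thesis
  proof
    assume "s = 0"
    hence "A *v x = \<mu> *s x" using x(2) Mx
      by (metis (no_types, lifting) Finite_Cartesian_Product.vec_eq_iff add.right_neutral mult_zero_right)
    thus ?thesis using x(1) unfolding eigenvalue_of_def by blast
  qed simp
qed

lemma spectral_ball_contains_line:
  assumes n2: "CARD('n::finite) \<ge> 2" and A: "(A::complex^'n^'n) \<in> spectral_ball"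
  shows "\<exists>B. B \<noteq> 0 \<and> (\<forall>z. A + cscale z B \<in> spectral_ball)"
proof -
  have A_ev: "\<And>c. eigenvalue_of A c \<Longrightarrow> cmod c < 1"
    using A unfolding spectral_ball_def spectral_radius_less_one_iff by auto
  obtain c where c: "eigenvalue_of (transpose A) c" using eigenvalue_of_exists by blast
  then obtain w where w: "w \<noteq> 0" "transpose A *v w = c *s w" unfolding eigenvalue_of_def by blast
  from w(1) obtain k where k: "w $ k \<noteq> 0"
    by (metis Finite_Cartesian_Product.vec_eq_iff Finite_Cartesian_Product.zero_index)
  obtain l :: 'n where l: "l \<noteq> k"
  proof -
    have "(UNIV::'n set) \<noteq> {k}"
    proof
      assume "(UNIV::'n set) = {k}"
      hence "CARD('n) = card {k}" by (simp only:)
      hence "CARD('n) = 1" by simp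
      with n2 show False by simp
    qed
    thus ?thesis using that by blast
  qed
  define v where "v = (\<chi> i. if i = k then w $ l else if i = l then - w $ k else 0)"
  have orth: "(\<Sum>i\<in>UNIV. w $ i * v $ i) = 0"
  proof -
    have "(\<Sum>i\<in>UNIV. w $ i * v $ i) = (\<Sum>i\<in>{k,l}. w $ i * v $ i)"
      by (rule sum.mono_neutral_right) (auto simp: v_def)
    also have "\<dots> = 0" using l by (simp add: v_def)
    finally show ?thesis .
  qed
  define B where "B = (\<chi> i j. v $ i * w $ j)"
  have "B $ l $ k \<noteq> 0" using l k by (simp add: B_def v_def)
  hence "B \<noteq> 0" by auto
  moreover have "A + cscale z B \<in> spectral_ball" for z
  proof -
    have "cmod \<mu> < 1" if "eigenvalue_of (A + cscale z B) \<mu>" for \<mu>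
      using eigenvalue_of_rank_one_update[OF w(2) orth that[unfolded B_def]] A_ev
        c[unfolded eigenvalue_of_transpose] by blast
    thus ?thesis unfolding spectral_ball_def spectral_radius_less_one_iff by auto
  qed
  ultimately show ?thesis by blast
qed

lemma holomorphic_immersion_line:
  assumes "B \<noteq> 0"
  shows "holomorphic_immersion (\<lambda>z. A + cscale z (B::complex^'n::finite^'n))"
proof -
  obtain i j where ij: "B $ i $ j \<noteq> 0"
    using assms by (metis Finite_Cartesian_Product.vec_eq_iff Finite_Cartesian_Product.zero_index)
  have entry: "(\<lambda>z. (A + cscale z B) $ i' $ j') = (\<lambda>z. A $ i' $ j' + z * B $ i' $ j')" for i' j'
    by (simp add: cscale_def)
  have "deriv (\<lambda>w. A $ i' $ j' + w * B $ i' $ j') z = B $ i' $ j'" for i' j' z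
    by (rule DERIV_imp_deriv) (auto intro!: derivative_eq_intros)
  with ij show ?thesis unfolding holomorphic_immersion_def entry
    by (auto intro!: holomorphic_intros)
qed

section \<open>Bounded subharmonic functions on the plane\<close>

definition period_integral :: "(real \<Rightarrow> real) \<Rightarrow> real" where
  "period_integral f = (LINT t:{0..2*pi}|lborel. f t)"

definition circle_point :: "complex \<Rightarrow> real \<Rightarrow> real \<Rightarrow> complex" where
  "circle_point z \<rho> t = z + complex_of_real \<rho> * cis t"

definition usc_real_on :: "'a::metric_space set \<Rightarrow> ('a \<Rightarrow> real) \<Rightarrow> bool" where
  "usc_real_on S f \<longleftrightarrow> (\<forall>z\<in>S. \<forall>c. f z < c \<longrightarrow> (\<exists>d>0. \<forall>w\<in>S. dist w z < d \<longrightarrow> f w < c))"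

lemma norm_circle_point_diff: "norm (circle_point z \<rho> t - z) = \<bar>\<rho>\<bar>"
  by (simp add: circle_point_def norm_mult)

lemma norm_circle_point_bounds:
  assumes "0 \<le> \<rho>"
  shows "norm (circle_point z \<rho> t) \<le> norm z + \<rho>" "norm z - \<rho> \<le> norm (circle_point z \<rho> t)"
proof -
  have n: "norm (circle_point z \<rho> t - z) = \<rho>" using norm_circle_point_diff[of z \<rho> t] assms by simp
  show "norm (circle_point z \<rho> t) \<le> norm z + \<rho>"
    using norm_triangle_sub[of "circle_point z \<rho> t" z] n by linarith
  show "norm z - \<rho> \<le> norm (circle_point z \<rho> t)"
    using norm_triangle_sub[of z "circle_point z \<rho> t"] n
      norm_minus_commute[of z "circle_point z \<rho> t"] by linarith
qed

lemma continuous_on_circle_point: "continuous_on UNIV (circle_point z \<rho>)"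
  unfolding circle_point_def by (intro continuous_intros)

lemma borel_measurable_circle_point [measurable]: "circle_point z \<rho> \<in> borel_measurable borel"
  by (rule borel_measurable_continuous_onI[OF continuous_on_circle_point])

lemma set_integrable_period_bounded:
  fixes f :: "real \<Rightarrow> real"
  assumes "f \<in> borel_measurable borel" "\<And>t. t \<in> {0..2*pi} \<Longrightarrow> \<bar>f t\<bar> \<le> C"
  shows "set_integrable lborel {0..2*pi} f"
  unfolding set_integrable_def
  by (rule integrableI_bounded_set_indicator[where B=C]) (use assms in auto)

lemma period_integral_const: "period_integral (\<lambda>t. c) = 2*pi*c"
  unfolding period_integral_def by (subst set_integral_const) auto

lemma period_integral_mono:
  "set_integrable lborel {0..2*pi} f \<Longrightarrow> set_integrable lborel {0..2*pi} g \<Longrightarrow>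
   (\<And>t. t \<in> {0..2*pi} \<Longrightarrow> f t \<le> g t) \<Longrightarrow> period_integral f \<le> period_integral g"
  unfolding period_integral_def by (rule set_integral_mono)

lemma period_integral_less:
  assumes int: "set_integrable lborel {0..2*pi} f"
    and le: "\<And>t. t \<in> {0..2*pi} \<Longrightarrow> f t \<le> m"
    and less: "\<And>t. t \<in> {0<..<pi/2} \<Longrightarrow> f t < m"
  shows "period_integral f < 2*pi*m"
proof -
  define g where "g t = m - f t" for t
  have const_int: "set_integrable lborel {0..2*pi} (\<lambda>t. m)"
    by (rule set_integrable_period_bounded[where C="\<bar>m\<bar>"]) auto
  have g_int: "set_integrable lborel {0..2*pi} g"
    unfolding g_def by (rule set_integral_diff(1)[OF const_int int])
  have g_integral: "period_integral g = 2*pi*m - period_integral f"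
    unfolding g_def period_integral_def using set_integral_diff(2)[OF const_int int]
      period_integral_const[of m] unfolding period_integral_def by simp
  have "period_integral g \<noteq> 0"
  proof
    assume "period_integral g = 0"
    hence "integral\<^sup>L lborel (\<lambda>t. indicator {0..2*pi} t *\<^sub>R g t) = 0"
      unfolding period_integral_def set_lebesgue_integral_def .
    moreover have "integrable lborel (\<lambda>t. indicator {0..2*pi} t *\<^sub>R g t)"
      using g_int unfolding set_integrable_def .
    moreover have "AE t in lborel. 0 \<le> indicator {0..2*pi} t *\<^sub>R g t"
      using le by (auto simp: g_def indicator_def)
    ultimately have "AE t in lborel. indicator {0..2*pi} t *\<^sub>R g t = 0"
      using integral_nonneg_eq_0_iff_AE by blast
    hence "AE t in lborel. t \<notin> {0<..<pi/2}"
    proof (rule eventually_mono)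
      fix t assume g0: "indicator {0..2*pi} t *\<^sub>R g t = 0"
      show "t \<notin> {0<..<pi/2}"
      proof
        assume t: "t \<in> {0<..<pi/2}"
        hence "g t = 0" using g0 by (auto simp: indicator_def)
        thus False using less[OF t] by (simp add: g_def)
      qed
    qed
    hence "{x\<in>space lborel. \<not> x \<notin> {0<..<pi/2}} \<in> null_sets lborel"
      by (subst AE_iff_null[symmetric]) auto
    moreover have "{x\<in>space lborel. \<not> x \<notin> {0<..<pi/2}} = {0<..<pi/2::real}" by auto
    ultimately have "emeasure lborel {0<..<pi/2::real} = 0" by (simp add: null_sets_def)
    thus False by simp
  qed
  moreover have "0 \<le> period_integral g"
    using period_integral_mono[of "\<lambda>t. 0" g] g_int period_integral_const[of 0] le
    by (simp add: g_def set_integrable_period_bounded[where C=0])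
  ultimately show ?thesis using g_integral by simp
qed

lemma period_integral_trig:
  "period_integral (\<lambda>t. \<alpha> + \<beta> * cos t + \<gamma> * sin t) = 2*pi*\<alpha>"
proof -
  have ic: "set_integrable lborel {0..2*pi} (\<lambda>t. \<beta> * cos t)"
    by (rule borel_integrable_atLeastAtMost') (intro continuous_intros)
  have isn: "set_integrable lborel {0..2*pi} (\<lambda>t. \<gamma> * sin t)"
    by (rule borel_integrable_atLeastAtMost') (intro continuous_intros)
  have ia: "set_integrable lborel {0..2*pi} (\<lambda>t. \<alpha>)"
    by (rule borel_integrable_atLeastAtMost') (intro continuous_intros)
  have c: "period_integral (\<lambda>t. \<beta> * cos t) = 0"
  proof -
    have "integral\<^sup>L lborel (\<lambda>x. indicator {0..2*pi} x *\<^sub>R (\<beta> * cos x))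
        = \<beta> * sin (2*pi) - \<beta> * sin 0"
      by (rule integral_FTC_atLeastAtMost)
        (auto simp: has_real_derivative_iff_has_vector_derivative[symmetric]
          intro!: derivative_eq_intros continuous_intros)
    thus ?thesis unfolding period_integral_def set_lebesgue_integral_def by simp
  qed
  have s: "period_integral (\<lambda>t. \<gamma> * sin t) = 0"
  proof -
    have "integral\<^sup>L lborel (\<lambda>x. indicator {0..2*pi} x *\<^sub>R (\<gamma> * sin x))
        = (- \<gamma> * cos (2*pi)) - (- \<gamma> * cos 0)"
      by (rule integral_FTC_atLeastAtMost)
        (auto simp: has_real_derivative_iff_has_vector_derivative[symmetric]
          intro!: derivative_eq_intros continuous_intros)
    thus ?thesis unfolding period_integral_def set_lebesgue_integral_def by simp
  qed
  have "period_integral (\<lambda>t. \<alpha> + \<beta> * cos t + \<gamma> * sin t)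
      = period_integral (\<lambda>t. \<alpha>) + period_integral (\<lambda>t. \<beta> * cos t) + period_integral (\<lambda>t. \<gamma> * sin t)"
    unfolding period_integral_def
    using set_integral_add(2)[OF set_integral_add(1)[OF ia ic] isn] set_integral_add(2)[OF ia ic]
    by simp
  thus ?thesis using c s period_integral_const by simp
qed

lemma has_integral_circle_mean_holomorphic:
  fixes f :: "complex \<Rightarrow> complex"
  assumes cont: "continuous_on (cball z \<rho>) f" and hol: "f holomorphic_on ball z \<rho>" and \<rho>: "0 < \<rho>"
  shows "((\<lambda>t. f (z + \<rho> * cis t)) has_integral (2*pi * f z)) {0..2*pi}"
proof -
  have "((\<lambda>u. f u / (u - z)) has_contour_integral (2 * of_real pi * \<i> * f z)) (circlepath z \<rho>)"
    by (rule Cauchy_integral_circlepath[OF cont hol]) (simp add: \<rho>)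
  hence "((\<lambda>t. f (z + \<rho> * cis t) / (z + \<rho> * cis t - z) * \<rho> * \<i> * cis t)
      has_integral (2 * of_real pi * \<i> * f z)) {0..2*pi}"
    unfolding circlepath_def by (subst (asm) has_contour_integral_part_circlepath_iff) auto
  moreover have "f (z + \<rho> * cis t) / (z + \<rho> * cis t - z) * \<rho> * \<i> * cis t = \<i> * f (z + \<rho> * cis t)" for t
  proof -
    have "a / (r * c) * r * \<i> * c = \<i> * a" if "r \<noteq> 0" "c \<noteq> 0" for a r c :: complex
      using that by (simp add: field_simps)
    thus ?thesis using \<rho> by simp
  qed
  ultimately have "((\<lambda>t. \<i> * f (z + \<rho> * cis t)) has_integral (\<i> * (2*pi * f z))) {0..2*pi}"
    by (simp add: mult_ac)
  from has_integral_mult_right[OF this, of "-\<i>"] show ?thesis by simp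
qed

lemma has_integral_ln_norm_circle:
  assumes "0 < \<rho>" "\<rho> < norm z"
  shows "((\<lambda>t. ln (norm (z + \<rho> * cis t))) has_integral (2*pi*ln(norm z))) {0..2*pi}"
proof -
  have z0: "z \<noteq> 0" using assms by auto
  txt \<open>\<open>ln |w| - ln |z|\<close> is the real part of \<open>Ln (w / z)\<close>, which is holomorphic near the closed
    disc since \<open>w / z\<close> stays in the right half-plane there.\<close>
  define f where "f w = Ln (w / z)" for w
  have right: "0 < Re (w / z)" if "w \<in> cball z \<rho>" for w
  proof -
    have "norm (w / z - 1) = norm (w - z) / norm z" using z0
      by (metis diff_divide_distrib divide_self_if norm_divide)
    also have "\<dots> < 1"
    proof -
      have "norm (w - z) < norm z" using that assms by (simp add: dist_norm norm_minus_commute)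
      thus ?thesis using z0 by (simp add: divide_less_eq_1_pos)
    qed
    finally have "\<bar>Re (w / z - 1)\<bar> < 1" using abs_Re_le_cmod le_less_trans by blast
    thus ?thesis by simp
  qed
  hence nonpos: "w / z \<notin> \<real>\<^sub>\<le>\<^sub>0" if "w \<in> cball z \<rho>" for w
    using that by (fastforce simp: complex_nonpos_Reals_iff)
  have "continuous_on (cball z \<rho>) f" "f holomorphic_on ball z \<rho>"
    unfolding f_def using nonpos by (auto intro!: continuous_intros holomorphic_intros)
  from has_integral_circle_mean_holomorphic[OF this assms(1)]
  have "((\<lambda>t. f (z + \<rho> * cis t)) has_integral 0) {0..2*pi}" using z0 by (simp add: f_def)
  from has_integral_linear[OF this bounded_linear_Re]
  have "((\<lambda>t. Re (f (z + \<rho> * cis t))) has_integral 0) {0..2*pi}" by (simp add: o_def)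
  moreover have "Re (f (z + \<rho> * cis t)) = ln (norm (z + \<rho> * cis t)) - ln (norm z)" for t
  proof -
    have "z + \<rho> * cis t \<in> cball z \<rho>" using assms by (simp add: dist_norm norm_mult)
    hence "z + \<rho> * cis t \<noteq> 0" using right by fastforce
    thus ?thesis unfolding f_def using z0 by (simp add: norm_divide ln_div)
  qed
  ultimately have "((\<lambda>t. ln (norm (z + \<rho> * cis t)) - ln (norm z)) has_integral 0) {0..2*pi}" by simp
  from has_integral_add[OF this has_integral_const_real[of "ln (norm z)" 0 "2*pi"]]
  show ?thesis by (simp add: mult_ac)
qed

lemma period_integral_ln_norm_circle:
  assumes "0 < \<rho>" "\<rho> < norm z"
  shows "period_integral (\<lambda>t. ln (norm (circle_point z \<rho> t))) = 2*pi*ln (norm z)"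
    and "set_integrable lborel {0..2*pi} (\<lambda>t. ln (norm (circle_point z \<rho> t)))"
proof -
  have "norm (circle_point z \<rho> t) > 0" for t
    using norm_circle_point_bounds(2)[of \<rho> z t] assms by linarith
  hence "continuous_on {0..2*pi} (\<lambda>t. ln (norm (circle_point z \<rho> t)))"
    by (intro continuous_intros continuous_on_subset[OF continuous_on_circle_point]) auto
  thus int: "set_integrable lborel {0..2*pi} (\<lambda>t. ln (norm (circle_point z \<rho> t)))"
    by (rule borel_integrable_atLeastAtMost')
  have "((\<lambda>t. ln (norm (circle_point z \<rho> t))) has_integral (2*pi*ln (norm z))) {0..2*pi}"
    using has_integral_ln_norm_circle[OF assms] by (simp add: circle_point_def)
  thus "period_integral (\<lambda>t. ln (norm (circle_point z \<rho> t))) = 2*pi*ln (norm z)"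
    unfolding period_integral_def set_borel_integral_eq_integral(2)[OF int] by (rule integral_unique)
qed

lemma usc_real_on_subset: "usc_real_on S f \<Longrightarrow> T \<subseteq> S \<Longrightarrow> usc_real_on T f"
  unfolding usc_real_on_def by (meson subsetD)

lemma usc_real_on_add_continuous:
  assumes "usc_real_on S f" "continuous_on S g"
  shows "usc_real_on S (\<lambda>x. f x + g x)"
  unfolding usc_real_on_def
proof (intro ballI allI impI)
  fix z c assume z: "z \<in> S" and lt: "f z + g z < c"
  define e where "e = (c - f z - g z) / 2"
  have e: "e > 0" using lt by (simp add: e_def)
  have "f z < f z + e" using e by simp
  then obtain d1 where d1: "d1 > 0" "\<forall>w\<in>S. dist w z < d1 \<longrightarrow> f w < f z + e"
    using assms(1) z unfolding usc_real_on_def by blast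
  obtain d2 where d2: "d2 > 0" "\<forall>w\<in>S. dist w z < d2 \<longrightarrow> dist (g w) (g z) < e"
    using assms(2) z e unfolding continuous_on_iff by blast
  show "\<exists>d>0. \<forall>w\<in>S. dist w z < d \<longrightarrow> f w + g w < c"
  proof (intro exI[of _ "min d1 d2"] conjI ballI impI)
    show "0 < min d1 d2" using d1 d2 by simp
    fix w assume w: "w \<in> S" "dist w z < min d1 d2"
    have "f w < f z + e" using d1 w by simp
    moreover have "\<bar>g w - g z\<bar> < e" using d2 w by (simp add: dist_real_def)
    moreover have "f z + e + (g z + e) = c" by (simp add: e_def field_simps)
    ultimately show "f w + g w < c" by (simp add: abs_less_iff)
  qed
qed

lemma usc_real_on_UNIV_measurable:
  fixes h :: "'a::metric_space \<Rightarrow> real"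
  assumes "usc_real_on UNIV h"
  shows "h \<in> borel_measurable borel"
proof (rule borel_measurableI_less)
  fix y
  have "open {x. h x < y}" unfolding open_dist
  proof (intro ballI)
    fix x assume "x \<in> {x. h x < y}"
    hence "h x < y" by simp
    then obtain d where "d > 0" "\<forall>w. dist w x < d \<longrightarrow> h w < y"
      using assms unfolding usc_real_on_def by blast
    thus "\<exists>e>0. \<forall>y'. dist y' x < e \<longrightarrow> y' \<in> {x. h x < y}" by auto
  qed
  thus "{x \<in> space borel. h x < y} \<in> sets borel" by simp
qed

lemma closed_superlevel_usc_real_on:
  assumes "usc_real_on K v" "closed K"
  shows "closed {w\<in>K. c \<le> v w}"
proof (subst closed_limpt, intro allI impI)
  fix x assume x: "x islimpt {w \<in> K. c \<le> v w}"
  hence xK: "x \<in> K" using assms(2) closed_limpt islimpt_subset[of x _ K] by blast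
  show "x \<in> {w \<in> K. c \<le> v w}"
  proof (rule ccontr)
    assume "x \<notin> {w \<in> K. c \<le> v w}"
    hence "v x < c" using xK by auto
    then obtain d where d: "d > 0" "\<forall>w\<in>K. dist w x < d \<longrightarrow> v w < c"
      using assms(1) xK unfolding usc_real_on_def by blast
    from x d(1) obtain y where "y \<in> {w \<in> K. c \<le> v w}" "dist y x < d"
      unfolding islimpt_approachable by blast
    with d(2) show False by auto
  qed
qed

lemma usc_real_on_attains_max:
  fixes v :: "complex \<Rightarrow> real"
  assumes "usc_real_on K v" "compact K" "K \<noteq> {}" "\<And>w. w \<in> K \<Longrightarrow> v w \<le> C"
  shows "\<exists>z\<in>K. \<forall>w\<in>K. v w \<le> v z"
proof -
  define m where "m = Sup (v ` K)"
  have bdd: "bdd_above (v ` K)" using assms(4) by (intro bdd_aboveI[of _ C]) auto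
  have le: "v w \<le> m" if "w \<in> K" for w unfolding m_def using bdd that by (auto intro: cSup_upper)
  define F where "F n = {w\<in>K. m - 1 / real (Suc n) \<le> v w}" for n
  have "compact (F n)" for n
  proof -
    have "closed (F n)" unfolding F_def
      by (rule closed_superlevel_usc_real_on[OF assms(1) compact_imp_closed[OF assms(2)]])
    moreover have "F n \<subseteq> K" unfolding F_def by auto
    ultimately show ?thesis using compact_Int_closed[OF assms(2)] by (metis inf.absorb_iff2)
  qed
  moreover have "F n \<noteq> {}" for n
  proof -
    have "m - 1 / real (Suc n) < m" by simp
    then obtain y where "y \<in> v ` K" "m - 1 / real (Suc n) < y"
      unfolding m_def using less_cSup_iff[OF _ bdd] assms(3) by (metis image_is_empty m_def)
    thus ?thesis unfolding F_def by force
  qed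
  moreover have "F n \<subseteq> F k" if "k \<le> n" for k n
  proof -
    have "1 / real (Suc n) \<le> 1 / real (Suc k)" using that by (simp add: frac_le)
    thus ?thesis unfolding F_def by auto
  qed
  ultimately have "\<Inter>(range F) \<noteq> {}" by (intro compact_nest) auto
  then obtain z where z: "\<And>n. z \<in> F n" by blast
  hence zK: "z \<in> K" unfolding F_def by auto
  have "m \<le> v z"
  proof (rule field_le_epsilon)
    fix e :: real assume e: "0 < e"
    obtain n where "1 / real (Suc n) < e"
      using e by (metis nat_approx_posE)
    moreover have "m - 1 / real (Suc n) \<le> v z" using z[of n] unfolding F_def by auto
    ultimately show "m \<le> v z + e" by linarith
  qed
  thus ?thesis using zK le by (meson order_trans)
qed

lemma usc_real_on_attains_max_rightmost:
  fixes v :: "complex \<Rightarrow> real"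
  assumes usc: "usc_real_on K v" and K: "compact K" "K \<noteq> {}" and bnd: "\<And>w. w \<in> K \<Longrightarrow> v w \<le> C"
  obtains z where "z \<in> K" "\<And>w. w \<in> K \<Longrightarrow> v w \<le> v z"
    "\<And>w. w \<in> K \<Longrightarrow> Re z < Re w \<Longrightarrow> v w < v z"
proof -
  obtain z1 where z1: "z1 \<in> K" "\<And>w. w \<in> K \<Longrightarrow> v w \<le> v z1"
    using usc_real_on_attains_max[OF usc K bnd] by blast
  define Kmax where "Kmax = {w\<in>K. v z1 \<le> v w}"
  have "closed Kmax" unfolding Kmax_def
    by (rule closed_superlevel_usc_real_on[OF usc compact_imp_closed[OF K(1)]])
  hence "compact (K \<inter> Kmax)" by (rule compact_Int_closed[OF K(1)])
  moreover have "K \<inter> Kmax = Kmax" by (auto simp: Kmax_def)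
  ultimately have "compact (Re ` Kmax)"
    by (intro compact_continuous_image) (auto intro!: continuous_intros)
  moreover have "Re ` Kmax \<noteq> {}" using z1 by (auto simp: Kmax_def)
  ultimately obtain a where "a \<in> Re ` Kmax" "\<forall>y\<in>Re ` Kmax. y \<le> a"
    using compact_attains_sup by metis
  then obtain z where z: "z \<in> Kmax" "\<And>w. w \<in> Kmax \<Longrightarrow> Re w \<le> Re z" by auto
  have "z \<in> K" "v z = v z1" using z(1) z1(2) by (auto simp: Kmax_def intro: antisym)
  moreover have "v w < v z" if "w \<in> K" "Re z < Re w" for w
    using z(2)[of w] that z1(2)[of w] \<open>v z = v z1\<close> by (force simp: Kmax_def)
  ultimately show ?thesis using that z1(2) by auto
qed

lemma maximum_principle_annulus:
  fixes v :: "complex \<Rightarrow> real"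
  assumes r: "0 < r" "r < R"
   and usc: "usc_real_on {w. r \<le> norm w \<and> norm w \<le> R} v"
   and meas: "v \<in> borel_measurable borel"
   and bnd: "\<And>w. r \<le> norm w \<Longrightarrow> norm w \<le> R \<Longrightarrow> \<bar>v w\<bar> \<le> C"
   and sub: "\<And>z \<rho>. 0 < \<rho> \<Longrightarrow> r < norm z - \<rho> \<Longrightarrow> norm z + \<rho> < R \<Longrightarrow>
               2*pi * v z \<le> period_integral (\<lambda>t. v (circle_point z \<rho> t))"
   and boundary: "\<And>w. norm w = r \<or> norm w = R \<Longrightarrow> v w \<le> T"
   and w: "r \<le> norm w" "norm w \<le> R"
  shows "v w \<le> T"
proof (rule ccontr)
  assume "\<not> v w \<le> T"
  define K where "K = {w::complex. r \<le> norm w \<and> norm w \<le> R}"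
  have wK: "w \<in> K" using w by (simp add: K_def)
  have "K = cball 0 R - ball 0 r" by (auto simp: K_def)
  hence "compact K" by (simp add: compact_diff)
  txt \<open>At a rightmost maximum point the maximum is not attained on the right quarter of small
    circles, which contradicts the sub-mean value property.\<close>
  then obtain z where zK: "z \<in> K" and zmax: "\<And>x. x \<in> K \<Longrightarrow> v x \<le> v z"
      and right: "\<And>x. x \<in> K \<Longrightarrow> Re z < Re x \<Longrightarrow> v x < v z"
    using usc_real_on_attains_max_rightmost[of K v C] usc bnd wK unfolding K_def
    by (metis (no_types, lifting) abs_le_D1 empty_iff mem_Collect_eq)
  have "\<not> (norm z = r \<or> norm z = R)" using boundary[of z] zmax[OF wK] \<open>\<not> v w \<le> T\<close> by auto
  hence zr: "r < norm z" "norm z < R" using zK by (auto simp: K_def)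
  define \<rho> where "\<rho> = min (norm z - r) (R - norm z) / 2"
  have "0 < \<rho>" "2*\<rho> \<le> norm z - r" "2*\<rho> \<le> R - norm z"
    using zr by (auto simp: \<rho>_def)
  hence \<rho>: "0 < \<rho>" "r < norm z - \<rho>" "norm z + \<rho> < R" by linarith+
  have circle_K: "circle_point z \<rho> t \<in> K" for t
    using norm_circle_point_bounds[of \<rho> z t] \<rho> by (simp add: K_def)
  have "set_integrable lborel {0..2*pi} (\<lambda>t. v (circle_point z \<rho> t))"
    by (rule set_integrable_period_bounded[where C=C])
      (use bnd circle_K measurable_compose[OF borel_measurable_circle_point meas] in \<open>auto simp: K_def\<close>)
  moreover have "v (circle_point z \<rho> t) < v z" if "t \<in> {0<..<pi/2}" for t
  proof -
    have "cos t > 0" using that by (auto intro: cos_gt_zero)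
    hence "Re z < Re (circle_point z \<rho> t)" using \<rho>(1) by (simp add: circle_point_def)
    thus ?thesis using right circle_K by blast
  qed
  ultimately have "period_integral (\<lambda>t. v (circle_point z \<rho> t)) < 2*pi * v z"
    using period_integral_less zmax[OF circle_K] by blast
  thus False using sub[OF \<rho>] by simp
qed

lemma period_integral_minus_log_circle:
  assumes int: "set_integrable lborel {0..2*pi} (\<lambda>t. h (circle_point z \<rho> t))"
    and \<rho>: "0 < \<rho>" "\<rho> < norm z" and r: "0 < r"
  shows "period_integral (\<lambda>t. h (circle_point z \<rho> t) - e * ln (norm (circle_point z \<rho> t) / r))
       = period_integral (\<lambda>t. h (circle_point z \<rho> t)) - 2*pi * (e * ln (norm z / r))"
proof -
  note ln_int = period_integral_ln_norm_circle[OF \<rho>]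
  have "norm (circle_point z \<rho> t) > 0" for t
    using norm_circle_point_bounds(2)[of \<rho> z t] \<rho> by linarith
  hence split: "ln (norm (circle_point z \<rho> t) / r) = ln (norm (circle_point z \<rho> t)) - ln r" for t
    using r by (simp add: ln_div)
  have const_int: "set_integrable lborel {0..2*pi} (\<lambda>t. ln r)"
    by (rule set_integrable_period_bounded[where C="\<bar>ln r\<bar>"]) auto
  have log_int: "set_integrable lborel {0..2*pi} (\<lambda>t. e * (ln (norm (circle_point z \<rho> t)) - ln r))"
    using set_integral_diff(1)[OF ln_int(2) const_int] by simp
  have "period_integral (\<lambda>t. h (circle_point z \<rho> t) - e * ln (norm (circle_point z \<rho> t) / r))
      = period_integral (\<lambda>t. h (circle_point z \<rho> t))
        - e * (period_integral (\<lambda>t. ln (norm (circle_point z \<rho> t))) - period_integral (\<lambda>t. ln r))"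
    unfolding split period_integral_def
    using set_integral_diff(2)[OF int log_int] set_integral_diff(2)[OF ln_int(2) const_int] by simp
  also have "\<dots> = period_integral (\<lambda>t. h (circle_point z \<rho> t)) - 2*pi * (e * (ln (norm z) - ln r))"
    using ln_int(1) period_integral_const[of "ln r"] by (simp add: algebra_simps)
  also have "ln (norm z) - ln r = ln (norm z / r)"
    using \<rho> r by (subst ln_div) auto
  finally show ?thesis .
qed

lemma bounded_subharmonic_le_Sup_circle_plus_log:
  fixes h :: "complex \<Rightarrow> real"
  assumes bnd: "\<And>w. \<bar>h w\<bar> \<le> C"
   and usc: "usc_real_on UNIV h"
   and sub: "\<And>z \<rho>. 0 < \<rho> \<Longrightarrow> 2*pi * h z \<le> period_integral (\<lambda>t. h (circle_point z \<rho> t))"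
   and r: "0 < r" and z: "r < norm z" and e: "0 < e"
  shows "h z \<le> Sup (h ` {w. norm w = r}) + e * ln (norm z / r)"
proof -
  define S where "S = Sup (h ` {w. norm w = r})"
  have meas: "h \<in> borel_measurable borel" by (rule usc_real_on_UNIV_measurable[OF usc])
  have bdd: "bdd_above (h ` {w. norm w = r})"
    using bnd by (intro bdd_aboveI[of _ C]) (auto simp: abs_le_iff)
  have le_S: "h w \<le> S" if "norm w = r" for w unfolding S_def using bdd that by (auto intro: cSup_upper)
  have S_ge: "-C \<le> S"
    using le_S[of "complex_of_real r"] bnd[of "complex_of_real r"] r by (simp add: abs_le_iff)
  txt \<open>Choose the outer radius \<open>R\<close> so large that the barrier \<open>e ln (|w|/r)\<close> exceeds \<open>2C\<close>
    on \<open>|w| = R\<close>.\<close>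
  define R where "R = max (norm z + 1) (r * exp (2*C/e))"
  have rR: "r < R" using z by (simp add: R_def)
  have "exp (2*C/e) \<le> R / r" using r by (simp add: R_def field_simps)
  hence "2*C/e \<le> ln (R / r)" using ln_le_cancel_iff[of "exp(2*C/e)" "R/r"] r rR by simp
  hence barrier: "2*C \<le> e * ln (R / r)" using e by (simp add: field_simps)
  define v where "v w = h w + (- e * ln (norm w / r))" for w
  let ?K = "{w::complex. r \<le> norm w \<and> norm w \<le> R}"
  have "v z \<le> S"
  proof (rule maximum_principle_annulus[of r R v "C + e * ln (R / r)" S z])
    have "continuous_on ?K (\<lambda>w. - e * ln (norm w / r))"
      by (intro continuous_intros) (use r in auto)
    with usc_real_on_subset[OF usc] show "usc_real_on ?K v" unfolding v_def
      by (intro usc_real_on_add_continuous) auto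
    have "(\<lambda>w::complex. norm w / r) \<in> borel_measurable borel"
      by (rule borel_measurable_continuous_onI) (intro continuous_intros, use r in auto)
    thus "v \<in> borel_measurable borel" unfolding v_def
      by (intro borel_measurable_add[OF meas] borel_measurable_times borel_measurable_ln) auto
    show "\<bar>v w\<bar> \<le> C + e * ln (R / r)" if "r \<le> norm w" "norm w \<le> R" for w
    proof -
      have "0 < norm w / r" using that r by (intro divide_pos_pos) auto
      hence "0 \<le> ln (norm w / r)" "ln (norm w / r) \<le> ln (R / r)"
        using that r by (auto simp: divide_right_mono)
      hence "\<bar>e * ln (norm w / r)\<bar> \<le> e * ln (R / r)" using e
        by (simp add: abs_mult mult_left_mono)
      thus ?thesis using bnd[of w] unfolding v_def by linarith
    qed
    show "2*pi * v z' \<le> period_integral (\<lambda>t. v (circle_point z' \<rho> t))"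
      if "0 < \<rho>" "r < norm z' - \<rho>" "norm z' + \<rho> < R" for z' \<rho>
    proof -
      have "set_integrable lborel {0..2*pi} (\<lambda>t. h (circle_point z' \<rho> t))"
        by (rule set_integrable_period_bounded[where C=C])
          (auto intro: measurable_compose[OF borel_measurable_circle_point meas] bnd)
      from period_integral_minus_log_circle[OF this that(1) _ r, of e]
      show ?thesis using sub[OF that(1), of z'] that r
        by (simp add: v_def algebra_simps)
    qed
    show "v w \<le> S" if "norm w = r \<or> norm w = R" for w
      using that
    proof
      assume "norm w = R"
      hence "v w = h w - e * ln (R / r)" by (simp add: v_def)
      also have "\<dots> \<le> -C" using bnd[of w] barrier by (simp add: abs_le_iff)
      finally show ?thesis using S_ge by simp
    qed (use le_S r in \<open>simp add: v_def\<close>)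
  qed (use r rR z in \<open>auto simp: R_def\<close>)
  thus ?thesis unfolding v_def S_def by simp
qed

lemma bounded_subharmonic_le_Sup_circle:
  fixes h :: "complex \<Rightarrow> real"
  assumes bnd: "\<And>w. \<bar>h w\<bar> \<le> C"
   and usc: "usc_real_on UNIV h"
   and sub: "\<And>z \<rho>. 0 < \<rho> \<Longrightarrow> 2*pi * h z \<le> period_integral (\<lambda>t. h (circle_point z \<rho> t))"
   and r: "0 < r" and rz: "r \<le> norm z"
  shows "h z \<le> Sup (h ` {w. norm w = r})"
proof (cases "norm z = r")
  case True
  have "bdd_above (h ` {w. norm w = r})"
    using bnd by (intro bdd_aboveI[of _ C]) (auto simp: abs_le_iff)
  thus ?thesis using True by (auto intro: cSup_upper)
next
  case False
  hence rz': "r < norm z" using rz by simp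
  have L: "0 < ln (norm z / r)"
  proof -
    have "1 < norm z / r" using r rz' by simp
    thus ?thesis by simp
  qed
  show ?thesis
  proof (rule field_le_epsilon)
    fix d :: real assume d: "0 < d"
    have "h z \<le> Sup (h ` {w. norm w = r}) + (d / ln (norm z / r)) * ln (norm z / r)"
      by (rule bounded_subharmonic_le_Sup_circle_plus_log[OF bnd usc _ r rz' divide_pos_pos[OF d L]]) (rule sub)
    thus "h z \<le> Sup (h ` {w. norm w = r}) + d" using L by simp
  qed
qed

lemma bounded_subharmonic_period_integral_le:
  fixes h :: "complex \<Rightarrow> real"
  assumes bnd: "\<And>w. \<bar>h w\<bar> \<le> C"
   and usc: "usc_real_on UNIV h"
   and sub: "\<And>z \<rho>. 0 < \<rho> \<Longrightarrow> 2*pi * h z \<le> period_integral (\<lambda>t. h (circle_point z \<rho> t))"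
   and \<rho>: "0 < \<rho>"
  shows "period_integral (\<lambda>t. h (circle_point 0 \<rho> t)) \<le> 2*pi * h 0"
proof (rule field_le_epsilon)
  fix \<delta> :: real assume \<delta>: "0 < \<delta>"
  define \<delta>' where "\<delta>' = \<delta> / (2*pi)"
  have \<delta>': "0 < \<delta>'" using \<delta> by (simp add: \<delta>'_def)
  have "h 0 < h 0 + \<delta>'" using \<delta>' by simp
  then obtain d where d: "d > 0" "\<And>w. dist w 0 < d \<Longrightarrow> h w < h 0 + \<delta>'"
    using usc unfolding usc_real_on_def by blast
  define r where "r = min (d/2) \<rho>"
  have r: "0 < r" "r < d" "r \<le> \<rho>" using d \<rho> by (auto simp: r_def)
  have ne: "{w::complex. norm w = r} \<noteq> {}"
    using r by (intro ex_in_conv[THEN iffD1] exI[of _ "complex_of_real r"]) auto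
  have Sr: "Sup (h ` {w. norm w = r}) \<le> h 0 + \<delta>'"
  proof (rule cSup_least)
    show "h ` {w. norm w = r} \<noteq> {}" using ne by simp
    fix y assume "y \<in> h ` {w. norm w = r}"
    then obtain w where "norm w = r" "y = h w" by auto
    thus "y \<le> h 0 + \<delta>'" using d(2)[of w] r by (simp add: dist_norm)
  qed
  have le: "h (circle_point 0 \<rho> t) \<le> h 0 + \<delta>'" for t
  proof -
    have "r \<le> norm (circle_point 0 \<rho> t)" using \<rho> r by (simp add: circle_point_def norm_mult)
    thus ?thesis using bounded_subharmonic_le_Sup_circle[OF bnd usc sub r(1)] Sr by (meson order_trans)
  qed
  have hi: "set_integrable lborel {0..2*pi} (\<lambda>t. h (circle_point 0 \<rho> t))"
    by (rule set_integrable_period_bounded[where C=C])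
      (auto intro: measurable_compose[OF borel_measurable_circle_point
        usc_real_on_UNIV_measurable[OF usc]] bnd)
  have ci: "set_integrable lborel {0..2*pi} (\<lambda>t. h 0 + \<delta>')"
    by (rule set_integrable_period_bounded[where C="\<bar>h 0 + \<delta>'\<bar>"]) auto
  have "period_integral (\<lambda>t. h (circle_point 0 \<rho> t)) \<le> period_integral (\<lambda>t. h 0 + \<delta>')"
    by (rule period_integral_mono[OF hi ci le])
  also have "\<dots> = 2*pi*h 0 + \<delta>" unfolding period_integral_const by (simp add: \<delta>'_def algebra_simps)
  finally show "period_integral (\<lambda>t. h (circle_point 0 \<rho> t)) \<le> 2*pi*h 0 + \<delta>" .
qed

section \<open>Plurisubharmonic functions along complex lines\<close>

lemma circle_mean_le_period_integral:
  fixes H :: "real \<Rightarrow> real"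
  assumes le: "\<And>t. t \<in> {0..2*pi} \<Longrightarrow> u (a + cscale (cis t) b) \<le> ereal (H t)"
    and H_int: "set_integrable lborel {0..2*pi} H"
  shows "circle_mean u a b \<le> ereal (period_integral H / (2*pi))"
proof -
  let ?S = "{0..2*pi::real}"
  define F where "F t = u (a + cscale (cis t) b)" for t
  define f where "f t = indicator ?S t *\<^sub>R H t" for t
  have f_int: "integrable lborel f" using H_int unfolding set_integrable_def f_def .
  have pos: "(\<integral>\<^sup>+ t\<in>?S. e2ennreal (F t) \<partial>lborel) \<le> (\<integral>\<^sup>+ t. ennreal (f t) \<partial>lborel)"
  proof (rule nn_integral_mono)
    fix t show "e2ennreal (F t) * indicator ?S t \<le> ennreal (f t)"
      using e2ennreal_mono[OF le[of t, folded F_def]] by (auto simp: f_def indicator_def)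
  qed
  have neg: "(\<integral>\<^sup>+ t. ennreal (- f t) \<partial>lborel) \<le> (\<integral>\<^sup>+ t\<in>?S. e2ennreal (- F t) \<partial>lborel)"
  proof (rule nn_integral_mono)
    fix t
    have "t \<in> ?S \<Longrightarrow> ereal (- H t) \<le> - F t" using le[of t, folded F_def]
      by (metis ereal_minus_le_minus uminus_ereal.simps(1))
    from e2ennreal_mono[OF this]
    show "ennreal (- f t) \<le> e2ennreal (- F t) * indicator ?S t"
      by (auto simp: f_def indicator_def)
  qed
  have real_nn: "enn2ereal x = ereal (enn2real x)" if "x \<noteq> \<infinity>" for x
    using that by (cases x rule: ennreal_cases) auto
  have "enn2ereal (\<integral>\<^sup>+ t\<in>?S. e2ennreal (F t) \<partial>lborel) - enn2ereal (\<integral>\<^sup>+ t\<in>?S. e2ennreal (- F t) \<partial>lborel)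
      \<le> enn2ereal (\<integral>\<^sup>+ t. ennreal (f t) \<partial>lborel) - enn2ereal (\<integral>\<^sup>+ t. ennreal (- f t) \<partial>lborel)"
    by (rule ereal_minus_mono) (use pos neg in \<open>simp_all add: less_eq_ennreal.rep_eq[symmetric]\<close>)
  also have "\<dots> = ereal (integral\<^sup>L lborel f)"
    unfolding real_lebesgue_integral_def[OF f_int]
      real_nn[OF integrableD(2)[OF f_int]] real_nn[OF integrableD(3)[OF f_int]] by simp
  also have "integral\<^sup>L lborel f = period_integral H"
    unfolding period_integral_def set_lebesgue_integral_def f_def ..
  finally have "enn2ereal (\<integral>\<^sup>+ t\<in>?S. e2ennreal (F t) \<partial>lborel)
      - enn2ereal (\<integral>\<^sup>+ t\<in>?S. e2ennreal (- F t) \<partial>lborel) \<le> ereal (period_integral H)" .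
  hence "circle_mean u a b \<le> ereal (1/(2*pi)) * ereal (period_integral H)"
    unfolding circle_mean_def Let_def F_def[symmetric] by (rule ereal_mult_left_mono) simp
  thus ?thesis by simp
qed

lemma cmod_add_cis_mult_power2:
  "(cmod (a + complex_of_real \<rho> * cis t * b))\<^sup>2 = (cmod a)\<^sup>2 + \<rho>\<^sup>2 * (cmod b)\<^sup>2
     + 2*\<rho>*(cos t * (Re a * Re b + Im a * Im b) + sin t * (Im a * Re b - Re a * Im b))"
proof -
  have expand: "(x + r*(c*p - s*q))\<^sup>2 + (y + r*(c*q + s*p))\<^sup>2
      = x\<^sup>2 + y\<^sup>2 + r\<^sup>2*(c\<^sup>2+s\<^sup>2)*(p\<^sup>2+q\<^sup>2) + 2*r*(c*(x*p+y*q) + s*(y*p - x*q))"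
    for x y r c s p q :: real
    by (simp add: power2_eq_square algebra_simps)
  have "(cmod (a + complex_of_real \<rho> * cis t * b))\<^sup>2 =
      (Re a + \<rho> * (cos t * Re b - sin t * Im b))\<^sup>2 + (Im a + \<rho> * (cos t * Im b + sin t * Re b))\<^sup>2"
    by (simp add: cmod_power2 algebra_simps)
  also have "\<dots> = (Re a)\<^sup>2 + (Im a)\<^sup>2 + \<rho>\<^sup>2 * ((cos t)\<^sup>2 + (sin t)\<^sup>2) * ((Re b)\<^sup>2 + (Im b)\<^sup>2)
     + 2*\<rho>*(cos t * (Re a * Re b + Im a * Im b) + sin t * (Im a * Re b - Re a * Im b))"
    by (rule expand)
  also have "\<dots> = (cmod a)\<^sup>2 + \<rho>\<^sup>2 * (cmod b)\<^sup>2
     + 2*\<rho>*(cos t * (Re a * Re b + Im a * Im b) + sin t * (Im a * Re b - Re a * Im b))"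
    by (simp add: cmod_power2)
  finally show ?thesis .
qed

lemma norm_add_cscale_cis_power2:
  fixes A B :: "complex^'n^'n"
  shows "(norm (A + cscale (complex_of_real \<rho> * cis t) B))\<^sup>2 = (norm A)\<^sup>2 + \<rho>\<^sup>2 * (norm B)\<^sup>2
     + 2*\<rho>*(cos t * (\<Sum>i\<in>UNIV. \<Sum>j\<in>UNIV. Re (A$i$j) * Re (B$i$j) + Im (A$i$j) * Im (B$i$j))
            + sin t * (\<Sum>i\<in>UNIV. \<Sum>j\<in>UNIV. Im (A$i$j) * Re (B$i$j) - Re (A$i$j) * Im (B$i$j)))"
proof -
  have "(norm (A + cscale (complex_of_real \<rho> * cis t) B))\<^sup>2 =
     (\<Sum>i\<in>UNIV. \<Sum>j\<in>UNIV. (cmod (A$i$j + complex_of_real \<rho> * cis t * B$i$j))\<^sup>2)"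
    unfolding norm_matrix_power2 by (simp add: cscale_def)
  also have "\<dots> = (\<Sum>i\<in>UNIV. \<Sum>j\<in>UNIV. (cmod (A$i$j))\<^sup>2 + \<rho>\<^sup>2 * (cmod (B$i$j))\<^sup>2
     + 2*\<rho>*(cos t * (Re (A$i$j) * Re (B$i$j) + Im (A$i$j) * Im (B$i$j))
            + sin t * (Im (A$i$j) * Re (B$i$j) - Re (A$i$j) * Im (B$i$j))))"
    by (simp only: cmod_add_cis_mult_power2)
  also have "\<dots> = (norm A)\<^sup>2 + \<rho>\<^sup>2 * (norm B)\<^sup>2
     + 2*\<rho>*(cos t * (\<Sum>i\<in>UNIV. \<Sum>j\<in>UNIV. Re (A$i$j) * Re (B$i$j) + Im (A$i$j) * Im (B$i$j))
            + sin t * (\<Sum>i\<in>UNIV. \<Sum>j\<in>UNIV. Im (A$i$j) * Re (B$i$j) - Re (A$i$j) * Im (B$i$j)))"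
    unfolding norm_matrix_power2 by (simp add: sum.distrib sum_distrib_left sum_subtractf algebra_simps)
  finally show ?thesis .
qed

lemma circle_mean_minus_norm_power2_le:
  fixes A B :: "complex^'n^'n" and H :: "real \<Rightarrow> real"
  assumes le: "\<And>t. u (A + cscale (complex_of_real \<rho> * cis t) B) \<le> ereal (H t)"
    and H_int: "set_integrable lborel {0..2*pi} H"
  shows "circle_mean (\<lambda>w. u w - ereal (\<epsilon> * (norm w)\<^sup>2)) A (cscale (complex_of_real \<rho>) B)
       \<le> ereal (period_integral H / (2*pi) - \<epsilon> * ((norm A)\<^sup>2 + \<rho>\<^sup>2 * (norm B)\<^sup>2))"
proof -
  define X where "X = (\<Sum>i\<in>UNIV. \<Sum>j\<in>UNIV. Re (A$i$j) * Re (B$i$j) + Im (A$i$j) * Im (B$i$j))"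
  define Y where "Y = (\<Sum>i\<in>UNIV. \<Sum>j\<in>UNIV. Im (A$i$j) * Re (B$i$j) - Re (A$i$j) * Im (B$i$j))"
  define \<alpha> where "\<alpha> = (norm A)\<^sup>2 + \<rho>\<^sup>2 * (norm B)\<^sup>2"
  define Q where "Q t = \<epsilon> * (\<alpha> + (2*\<rho>*X) * cos t + (2*\<rho>*Y) * sin t)" for t
  have point: "A + cscale (cis t) (cscale (complex_of_real \<rho>) B)
      = A + cscale (complex_of_real \<rho> * cis t) B" for t
    by (simp add: cscale_cscale mult.commute)
  have norm_point: "\<epsilon> * (norm (A + cscale (complex_of_real \<rho> * cis t) B))\<^sup>2 = Q t" for t
    unfolding norm_add_cscale_cis_power2 Q_def \<alpha>_def X_def Y_def by (simp add: algebra_simps)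
  have Q_int: "set_integrable lborel {0..2*pi} Q"
    unfolding Q_def by (rule borel_integrable_atLeastAtMost') (intro continuous_intros)
  have "circle_mean (\<lambda>w. u w - ereal (\<epsilon> * (norm w)\<^sup>2)) A (cscale (complex_of_real \<rho>) B)
      \<le> ereal (period_integral (\<lambda>t. H t - Q t) / (2*pi))"
  proof (rule circle_mean_le_period_integral)
    show "set_integrable lborel {0..2*pi} (\<lambda>t. H t - Q t)"
      by (rule set_integral_diff(1)[OF H_int Q_int])
    show "u (A + cscale (cis t) (cscale (complex_of_real \<rho>) B))
        - ereal (\<epsilon> * (norm (A + cscale (cis t) (cscale (complex_of_real \<rho>) B)))\<^sup>2) \<le> ereal (H t - Q t)" for t
      unfolding point norm_point using le[of t] by (metis ereal_minus(1) ereal_minus_mono order_refl)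
  qed
  also have "period_integral (\<lambda>t. H t - Q t) = period_integral H - 2*pi * (\<epsilon> * \<alpha>)"
    using set_integral_diff(2)[OF H_int Q_int]
      period_integral_trig[of "\<epsilon> * \<alpha>" "\<epsilon> * (2*\<rho>*X)" "\<epsilon> * (2*\<rho>*Y)"]
    unfolding period_integral_def Q_def by (simp add: algebra_simps)
  finally show ?thesis unfolding \<alpha>_def by (simp add: field_simps)
qed

lemma dist_line: "dist (A + cscale \<zeta>' B) (A + cscale \<zeta> B) = cmod (\<zeta>' - \<zeta>) * norm (B::complex^'n^'n)"
  by (simp add: dist_norm cscale_diff norm_cscale)

lemma usc_real_on_truncated_line:
  fixes u :: "complex^'n^'n \<Rightarrow> ereal"
  assumes usc: "usc_on S u" and line: "\<And>z. A + cscale z B \<in> S"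
    and h: "\<And>\<zeta>. ereal (h \<zeta>) = max (u (A + cscale \<zeta> B)) (ereal c0)"
  shows "usc_real_on UNIV h"
  unfolding usc_real_on_def
proof (intro ballI allI impI)
  fix \<zeta> :: complex and c :: real assume "h \<zeta> < c"
  hence "max (u (A + cscale \<zeta> B)) (ereal c0) < ereal c" by (simp flip: h)
  hence uc: "u (A + cscale \<zeta> B) < ereal c" and c0c: "c0 < c" by auto
  obtain d where d: "d > 0" "\<forall>W\<in>S. dist W (A + cscale \<zeta> B) < d \<longrightarrow> u W < ereal c"
    using usc line[of \<zeta>] uc unfolding usc_on_def by blast
  have nB: "0 < norm B + 1" by (simp add: add_nonneg_pos)
  show "\<exists>d>0. \<forall>w\<in>UNIV. dist w \<zeta> < d \<longrightarrow> h w < c"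
  proof (intro exI[of _ "d / (norm B + 1)"] conjI ballI impI)
    show "0 < d / (norm B + 1)" using d(1) nB by simp
    fix w :: complex assume "dist w \<zeta> < d / (norm B + 1)"
    hence "cmod (w - \<zeta>) * (norm B + 1) < d" using nB by (simp add: dist_norm pos_less_divide_eq)
    moreover have "cmod (w - \<zeta>) * norm B \<le> cmod (w - \<zeta>) * (norm B + 1)" by (simp add: mult_left_mono)
    ultimately have "dist (A + cscale w B) (A + cscale \<zeta> B) < d" unfolding dist_line by linarith
    hence "u (A + cscale w B) < ereal c" using d(2) line[of w] by blast
    hence "ereal (h w) < ereal c" unfolding h using c0c by simp
    thus "h w < c" by simp
  qed
qed

lemma sub_mean_truncated_line:
  fixes u :: "complex^'n^'n \<Rightarrow> ereal"
  assumes sub: "\<And>a b. (\<forall>\<zeta>. cmod \<zeta> \<le> 1 \<longrightarrow> a + cscale \<zeta> b \<in> S) \<Longrightarrow> u a \<le> circle_mean u a b"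
    and line: "\<And>z. A + cscale z B \<in> S"
    and h: "\<And>\<zeta>. ereal (h \<zeta>) = max (u (A + cscale \<zeta> B)) (ereal c0)"
    and bnd: "\<And>\<zeta>. \<bar>h \<zeta>\<bar> \<le> C"
    and meas: "h \<in> borel_measurable borel"
    and \<rho>: "0 < \<rho>"
  shows "2*pi * h z \<le> period_integral (\<lambda>t. h (circle_point z \<rho> t))"
proof -
  define a where "a = A + cscale z B"
  define b where "b = cscale (complex_of_real \<rho>) B"
  have on_line: "a + cscale \<zeta> b = A + cscale (z + \<zeta> * \<rho>) B" for \<zeta>
    by (simp add: a_def b_def cscale_cscale add.assoc cscale_add)
  have h_int: "set_integrable lborel {0..2*pi} (\<lambda>t. h (circle_point z \<rho> t))"
    by (rule set_integrable_period_bounded[where C=C])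
      (auto intro: measurable_compose[OF borel_measurable_circle_point meas] bnd)
  have "\<forall>\<zeta>. cmod \<zeta> \<le> 1 \<longrightarrow> a + cscale \<zeta> b \<in> S" unfolding on_line using line by blast
  hence "u a \<le> circle_mean u a b" by (rule sub)
  also have "\<dots> \<le> ereal (period_integral (\<lambda>t. h (circle_point z \<rho> t)) / (2*pi))"
  proof (rule circle_mean_le_period_integral[OF _ h_int])
    show "u (a + cscale (cis t) b) \<le> ereal (h (circle_point z \<rho> t))" for t
    proof -
      have "a + cscale (cis t) b = A + cscale (circle_point z \<rho> t) B"
        unfolding on_line circle_point_def by (simp add: mult.commute)
      thus ?thesis unfolding h by simp
    qed
  qed
  finally have "u a \<le> ereal (period_integral (\<lambda>t. h (circle_point z \<rho> t)) / (2*pi))" .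
  moreover have "2*pi*c0 \<le> period_integral (\<lambda>t. h (circle_point z \<rho> t))"
  proof -
    have "ereal c0 \<le> ereal (h \<zeta>)" for \<zeta> unfolding h by simp
    hence c0_le: "c0 \<le> h \<zeta>" for \<zeta> by simp
    have "period_integral (\<lambda>t. c0) \<le> period_integral (\<lambda>t. h (circle_point z \<rho> t))"
      by (rule period_integral_mono[OF set_integrable_period_bounded[where C="\<bar>c0\<bar>"] h_int])
        (auto intro: c0_le)
    thus ?thesis unfolding period_integral_const .
  qed
  hence "ereal c0 \<le> ereal (period_integral (\<lambda>t. h (circle_point z \<rho> t)) / (2*pi))"
    by (simp add: field_simps)
  ultimately have "ereal (h z) \<le> ereal (period_integral (\<lambda>t. h (circle_point z \<rho> t)) / (2*pi))"
    unfolding h a_def[symmetric] by simp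
  thus ?thesis by (simp add: field_simps)
qed

text \<open>Truncating from below keeps the sub-mean value property and makes the restriction of
  \<open>u\<close> to the line real-valued and bounded.\<close>

lemma plurisubharmonic_on_line_bounded_subharmonic_majorant:
  fixes u :: "complex^'n^'n \<Rightarrow> ereal"
  assumes psh: "plurisubharmonic_on S u" and line: "\<And>z. A + cscale z B \<in> S"
    and bound: "\<And>X. X \<in> S \<Longrightarrow> u X \<le> ereal M" and uA: "u A = ereal a"
  obtains h :: "complex \<Rightarrow> real" and C where "\<And>\<zeta>. \<bar>h \<zeta>\<bar> \<le> C" "usc_real_on UNIV h"
    "\<And>z \<rho>. 0 < \<rho> \<Longrightarrow> 2*pi * h z \<le> period_integral (\<lambda>t. h (circle_point z \<rho> t))"
    "\<And>\<zeta>. u (A + cscale \<zeta> B) \<le> ereal (h \<zeta>)" "h 0 = a"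
proof -
  define K where "K = \<bar>M\<bar> + \<bar>a\<bar> + 1"
  define h where "h \<zeta> = real_of_ereal (max (u (A + cscale \<zeta> B)) (ereal (- K)))" for \<zeta>
  have h: "ereal (h \<zeta>) = max (u (A + cscale \<zeta> B)) (ereal (- K))" for \<zeta>
  proof -
    have "u (A + cscale \<zeta> B) \<noteq> \<infinity>" using bound[OF line, of \<zeta>] by auto
    hence "\<bar>max (u (A + cscale \<zeta> B)) (ereal (- K))\<bar> \<noteq> \<infinity>"
      by (cases "u (A + cscale \<zeta> B)") (auto simp: max_def)
    thus ?thesis unfolding h_def by (rule ereal_real')
  qed
  have bnd: "\<bar>h \<zeta>\<bar> \<le> K" for \<zeta>
  proof -
    have "ereal (h \<zeta>) \<le> ereal M \<or> ereal (h \<zeta>) = ereal (- K)"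
      using bound[OF line] unfolding h by (auto simp: max_def)
    moreover have "ereal (- K) \<le> ereal (h \<zeta>)" unfolding h by simp
    ultimately show ?thesis unfolding K_def by auto
  qed
  have "usc_on S u"
    and sub: "\<And>a b. (\<forall>\<zeta>. cmod \<zeta> \<le> 1 \<longrightarrow> a + cscale \<zeta> b \<in> S) \<Longrightarrow> u a \<le> circle_mean u a b"
    using psh unfolding plurisubharmonic_on_def by blast+
  have usc: "usc_real_on UNIV h"
    by (rule usc_real_on_truncated_line[of S u A B h "- K", OF \<open>usc_on S u\<close> line h])
  show ?thesis
  proof (rule that[OF bnd usc])
    show "2*pi * h z \<le> period_integral (\<lambda>t. h (circle_point z \<rho> t))" if "0 < \<rho>" for z \<rho>
      by (rule sub_mean_truncated_line[OF sub line h bnd usc_real_on_UNIV_measurable[OF usc] that])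
    show "u (A + cscale \<zeta> B) \<le> ereal (h \<zeta>)" for \<zeta> unfolding h by simp
    have "- K \<le> a" unfolding K_def by simp
    hence "ereal (h 0) = ereal a" unfolding h using uA by (simp add: max_absorb1)
    thus "h 0 = a" by simp
  qed
qed

lemma not_strictly_plurisubharmonic_bounded_along_line:
  fixes u :: "complex^'n^'n \<Rightarrow> ereal"
  assumes spsh: "strictly_plurisubharmonic_on S u" and bound: "\<And>X. X \<in> S \<Longrightarrow> u X \<le> ereal M"
    and A: "A \<in> S" "u A \<noteq> -\<infinity>" and line: "\<And>z. A + cscale z B \<in> S" and B: "B \<noteq> 0"
  shows False
proof -
  have psh: "plurisubharmonic_on S u" using spsh unfolding strictly_plurisubharmonic_on_def by blast
  obtain a where uA: "u A = ereal a"
    using A psh unfolding plurisubharmonic_on_def by (cases "u A") auto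
  obtain h C where bnd: "\<And>\<zeta>. \<bar>h \<zeta>\<bar> \<le> C" and usc: "usc_real_on UNIV h"
    and sub: "\<And>z \<rho>. 0 < \<rho> \<Longrightarrow> 2*pi * h z \<le> period_integral (\<lambda>t. h (circle_point z \<rho> t))"
    and major: "\<And>\<zeta>. u (A + cscale \<zeta> B) \<le> ereal (h \<zeta>)" and h0: "h 0 = a"
    using plurisubharmonic_on_line_bounded_subharmonic_majorant[OF psh line bound uA] by blast
  obtain r \<epsilon> where r: "r > 0" and \<epsilon>: "\<epsilon> > 0"
    and psh_ball: "plurisubharmonic_on (ball A r) (\<lambda>w. u w - ereal (\<epsilon> * (norm w)\<^sup>2))"
    using spsh A unfolding strictly_plurisubharmonic_on_def by blast
  define \<rho> where "\<rho> = r / 2 / (norm B + 1)"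
  have nB: "0 < norm B + 1" by (simp add: add_nonneg_pos)
  hence "0 < \<rho>" "\<rho> * (norm B + 1) = r / 2" using r unfolding \<rho>_def by (simp_all add: field_simps)
  moreover have "\<rho> * norm B \<le> \<rho> * (norm B + 1)" using \<open>0 < \<rho>\<close> by simp
  ultimately have \<rho>: "0 < \<rho>" "\<rho> * norm B < r" using r by linarith+
  have "A + cscale \<zeta> (cscale (complex_of_real \<rho>) B) \<in> ball A r" if "cmod \<zeta> \<le> 1" for \<zeta>
  proof -
    have "cmod \<zeta> * (\<rho> * norm B) \<le> \<rho> * norm B"
      using that \<rho>(1) by (simp add: mult_left_le_one_le)
    moreover have "norm (cscale \<zeta> (cscale (complex_of_real \<rho>) B)) = cmod \<zeta> * (\<rho> * norm B)"
      using \<rho>(1) by (simp add: cscale_cscale norm_cscale norm_mult)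
    ultimately show ?thesis using \<rho>(2) by (simp add: dist_norm)
  qed
  hence "u A - ereal (\<epsilon> * (norm A)\<^sup>2)
      \<le> circle_mean (\<lambda>w. u w - ereal (\<epsilon> * (norm w)\<^sup>2)) A (cscale (complex_of_real \<rho>) B)"
    using psh_ball unfolding plurisubharmonic_on_def by blast
  also have "\<dots> \<le> ereal (period_integral (\<lambda>t. h (circle_point 0 \<rho> t)) / (2*pi)
                         - \<epsilon> * ((norm A)\<^sup>2 + \<rho>\<^sup>2 * (norm B)\<^sup>2))"
    (is "_ \<le> ereal (?I / (2*pi) - _)")
  proof (rule circle_mean_minus_norm_power2_le)
    show "u (A + cscale (complex_of_real \<rho> * cis t) B) \<le> ereal (h (circle_point 0 \<rho> t))" for t
      using major by (simp add: circle_point_def)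
    show "set_integrable lborel {0..2*pi} (\<lambda>t. h (circle_point 0 \<rho> t))"
      by (rule set_integrable_period_bounded[where C=C])
        (auto intro: measurable_compose[OF borel_measurable_circle_point
          usc_real_on_UNIV_measurable[OF usc]] bnd)
  qed
  finally have "a - \<epsilon> * (norm A)\<^sup>2 \<le> ?I / (2*pi) - \<epsilon> * ((norm A)\<^sup>2 + \<rho>\<^sup>2 * (norm B)\<^sup>2)"
    unfolding uA by simp
  moreover have "?I / (2*pi) \<le> a"
    using bounded_subharmonic_period_integral_le[OF bnd usc sub \<rho>(1)] h0 by (simp add: field_simps)
  ultimately have "\<epsilon> * (\<rho>\<^sup>2 * (norm B)\<^sup>2) \<le> 0" by (simp add: algebra_simps)
  moreover have "0 < \<epsilon> * (\<rho>\<^sup>2 * (norm B)\<^sup>2)" using \<epsilon> \<rho>(1) B by simp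
  ultimately show False by simp
qed

theorem corollary1:
  assumes "CARD('n::finite) \<ge> 2"
  shows "(\<forall>A\<in>(spectral_ball :: (complex^'n^'n) set).
            \<exists>f. holomorphic_immersion f \<and> range f \<subseteq> spectral_ball \<and> A \<in> range f)
       \<and> \<not> (\<exists>u :: complex^'n^'n \<Rightarrow> ereal.
              strictly_plurisubharmonic_on spectral_ball u \<and>
              (\<exists>M::real. \<forall>A\<in>spectral_ball. u A \<le> ereal M))"
proof (intro conjI ballI notI)
  fix A :: "complex^'n^'n" assume "A \<in> spectral_ball"
  then obtain B where "B \<noteq> 0" "\<And>z. A + cscale z B \<in> spectral_ball"
    using spectral_ball_contains_line[OF assms] by blast
  moreover have "A = A + cscale 0 B" by simp
  ultimately show "\<exists>f. holomorphic_immersion f \<and> range f \<subseteq> spectral_ball \<and> A \<in> range f"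
    using holomorphic_immersion_line by blast
next
  assume "\<exists>u :: complex^'n^'n \<Rightarrow> ereal. strictly_plurisubharmonic_on spectral_ball u \<and>
            (\<exists>M::real. \<forall>A\<in>spectral_ball. u A \<le> ereal M)"
  then obtain u :: "complex^'n^'n \<Rightarrow> ereal" and M where
    spsh: "strictly_plurisubharmonic_on spectral_ball u" and bound: "\<forall>A\<in>spectral_ball. u A \<le> ereal M"
    by blast
  obtain A where "A \<in> connected_component_set spectral_ball 0" and uA: "u A \<noteq> -\<infinity>"
    using spsh zero_in_spectral_ball
    unfolding strictly_plurisubharmonic_on_def plurisubharmonic_on_def by blast
  hence A: "A \<in> spectral_ball" using connected_component_subset by blast
  obtain B where "B \<noteq> 0" "\<And>z. A + cscale z B \<in> spectral_ball"
    using spectral_ball_contains_line[OF assms A] by blast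
  with spsh bound A uA show False
    using not_strictly_plurisubharmonic_bounded_along_line by blast
qed

end
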